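(* Let $P=\{x\in\mathbb{R}^n: Ax\ge b\}$ with rational data be full-dimensional and pointed, $c\in\mathbb{R}^n$, and $\bar x$ a basic optimal solution of $\min\{c^\top x: x\in P\}$. Let $\mathcal{T}$ be finite, $P^t=\{x\in P: D^tx\ge D^t_0\}$ the terms of a disjunction, $P_D=\operatorname{cl}\operatorname{conv}(\bigcup_tP^t)$, with $\bar x\notin P_D$. For each $t$, let $p^t$ be a basic optimal solution of $\min\{c^\top x: x\in P^t\}$, $C^t$ the basis cone at $p^t$ with extreme rays $r^{t1},\dots,r^{tn}$, and $P_D^0=\operatorname{conv}\{p^t:t\in\mathcal{T}\}+\operatorname{cone}\{r^{tj}: t\in\mathcal{T},j\in[n]\}$. Suppose that the basis defining $p^t$ is unique for each $t\in\mathcal{T}$. If a facet of $P_D^0$ is standard, then it is a facet of $P_D$ that cuts off $\bar x$.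
   Context: A cobasis of a basic solution $p^t$ of $P^t$ is a set of $n$ linearly independent inequalities from the system defining $P^t$ that are tight at $p^t$; the basis cone $C^t$ is the intersection of these $n$ half-spaces. Nonbasic space: fix a cobasis $\{a_i^\top x\ge b_i: i\in N\}$ ($|N|=n$) of $\bar x$ in $P$; write $\tilde x=(a_i^\top x-b_i)_{i\in N}$ for points and $\tilde r=(a_i^\top r)_{i\in N}$ for rays, so $\bar x$ maps to the origin. PRLP$^0$ is the system in $\tilde\alpha\in\mathbb{R}^n$: $\tilde\alpha^\top\tilde p^t\ge 1$ for all $t\in\mathcal{T}$, $\tilde\alpha^\top\tilde r^{tj}\ge 0$ for all $t,j$; each feasible $\tilde\alpha$ gives the inequality $\tilde\alpha^\top\tilde x\ge 1$, violated by $\bar x$. A basic feasible solution $\tilde\alpha$ of PRLP$^0$ is one for which $n$ constraints are tight with linearly independent coefficient vectors; the corresponding points and rays are its nonbasic points and nonbasic rays. A facet of $P_D^0$ that cuts off $\bar x$ corresponds to such basic feasible solutions. For a basic feasible solution $\tilde\alpha$, a nonbasic ray $r^{tj}$ is a stray ray if there is no $t'\in\mathcal{T}$ such that $r^{tj}$ is an extreme ray of $C^{t'}$ and $\tilde\alpha^\top\tilde p^{t'}=1$. A facet of $P_D^0$ is standard if there is a corresponding basic feasible solution of PRLP$^0$ with no stray rays. *)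

theory Defs
  imports "HOL-Analysis.Analysis"
begin

definition ineq_poly :: "'k set \<Rightarrow> ('k \<Rightarrow> real^'n) \<Rightarrow> ('k \<Rightarrow> real) \<Rightarrow> (real^'n) set" where
  "ineq_poly S rw rhs = {x. \<forall>k\<in>S. rw k \<bullet> x \<ge> rhs k}"

definition is_cobasis :: "'k set \<Rightarrow> ('k \<Rightarrow> real^'n) \<Rightarrow> ('k \<Rightarrow> real) \<Rightarrow> real^'n \<Rightarrow> 'k set \<Rightarrow> bool" where
  "is_cobasis S rw rhs x N \<longleftrightarrow>
     N \<subseteq> S \<and> card N = CARD('n) \<and> inj_on rw N \<and> independent (rw ` N) \<and>
     (\<forall>k\<in>N. rw k \<bullet> x = rhs k)"

definition basic_optimal :: "'k set \<Rightarrow> ('k \<Rightarrow> real^'n) \<Rightarrow> ('k \<Rightarrow> real) \<Rightarrow> real^'n \<Rightarrow> real^'n \<Rightarrow> bool" where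
  "basic_optimal S rw rhs c x \<longleftrightarrow>
     x \<in> ineq_poly S rw rhs \<and> (\<exists>N. is_cobasis S rw rhs x N) \<and>
     (\<forall>y\<in>ineq_poly S rw rhs. c \<bullet> x \<le> c \<bullet> y)"

definition basis_cone :: "('k \<Rightarrow> real^'n) \<Rightarrow> ('k \<Rightarrow> real) \<Rightarrow> 'k set \<Rightarrow> (real^'n) set" where
  "basis_cone rw rhs N = ineq_poly N rw rhs"

definition extreme_ray_of :: "real^'n \<Rightarrow> (real^'n) set \<Rightarrow> real^'n \<Rightarrow> bool" where
  "extreme_ray_of r C p \<longleftrightarrow> r \<noteq> 0 \<and> {p + s *\<^sub>R r | s. s \<ge> 0} face_of C"

definition pointed :: "(real^'n) set \<Rightarrow> bool" where
  "pointed P \<longleftrightarrow> \<not> (\<exists>x d. d \<noteq> 0 \<and> (\<forall>s::real. x + s *\<^sub>R d \<in> P))"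

text \<open>System defining P^t: the rows of A (Inl) followed by the rows of D^t (Inr).\<close>
definition term_row :: "('i \<Rightarrow> real^'n) \<Rightarrow> ('t \<Rightarrow> 'k \<Rightarrow> real^'n) \<Rightarrow> 't \<Rightarrow> 'i + 'k \<Rightarrow> real^'n" where
  "term_row a d t q = (case q of Inl i \<Rightarrow> a i | Inr k \<Rightarrow> d t k)"

definition term_rhs :: "('i \<Rightarrow> real) \<Rightarrow> ('t \<Rightarrow> 'k \<Rightarrow> real) \<Rightarrow> 't \<Rightarrow> 'i + 'k \<Rightarrow> real" where
  "term_rhs b d0 t q = (case q of Inl i \<Rightarrow> b i | Inr k \<Rightarrow> d0 t k)"

definition term_idx :: "'i set \<Rightarrow> ('t \<Rightarrow> 'k set) \<Rightarrow> 't \<Rightarrow> ('i + 'k) set" where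
  "term_idx I K t = Inl ` I \<union> Inr ` K t"

text \<open>Nonbasic space w.r.t. a cobasis {a (sigma j) : j}, sigma a bijection from the
  coordinate index type 'n onto the cobasis.\<close>
definition nb_pt :: "('i \<Rightarrow> real^'n) \<Rightarrow> ('i \<Rightarrow> real) \<Rightarrow> ('n \<Rightarrow> 'i) \<Rightarrow> real^'n \<Rightarrow> real^'n" where
  "nb_pt a b \<sigma> x = (\<chi> j. a (\<sigma> j) \<bullet> x - b (\<sigma> j))"

definition nb_ray :: "('i \<Rightarrow> real^'n) \<Rightarrow> ('n \<Rightarrow> 'i) \<Rightarrow> real^'n \<Rightarrow> real^'n" where
  "nb_ray a \<sigma> r = (\<chi> j. a (\<sigma> j) \<bullet> r)"

text \<open>PRLP^0: constraints indexed by Inl t (points) and Inr (t,j) (rays).\<close>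
definition prlp_coef :: "('i \<Rightarrow> real^'n) \<Rightarrow> ('i \<Rightarrow> real) \<Rightarrow> ('n \<Rightarrow> 'i) \<Rightarrow>
    ('t \<Rightarrow> real^'n) \<Rightarrow> ('t \<Rightarrow> 'n \<Rightarrow> real^'n) \<Rightarrow> 't + ('t \<times> 'n) \<Rightarrow> real^'n" where
  "prlp_coef a b \<sigma> p r q = (case q of Inl t \<Rightarrow> nb_pt a b \<sigma> (p t) | Inr (t, j) \<Rightarrow> nb_ray a \<sigma> (r t j))"

definition prlp_rhs :: "'t + ('t \<times> 'n) \<Rightarrow> real" where
  "prlp_rhs q = (case q of Inl t \<Rightarrow> 1 | Inr tj \<Rightarrow> 0)"

definition prlp_feasible :: "('i \<Rightarrow> real^'n) \<Rightarrow> ('i \<Rightarrow> real) \<Rightarrow> ('n \<Rightarrow> 'i) \<Rightarrow> 't set \<Rightarrow>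
    ('t \<Rightarrow> real^'n) \<Rightarrow> ('t \<Rightarrow> 'n \<Rightarrow> real^'n) \<Rightarrow> real^'n \<Rightarrow> bool" where
  "prlp_feasible a b \<sigma> T p r \<alpha> \<longleftrightarrow>
     (\<forall>t\<in>T. \<alpha> \<bullet> nb_pt a b \<sigma> (p t) \<ge> 1) \<and> (\<forall>t\<in>T. \<forall>j. \<alpha> \<bullet> nb_ray a \<sigma> (r t j) \<ge> 0)"

definition prlp_basic :: "('i \<Rightarrow> real^'n) \<Rightarrow> ('i \<Rightarrow> real) \<Rightarrow> ('n \<Rightarrow> 'i) \<Rightarrow> 't set \<Rightarrow>
    ('t \<Rightarrow> real^'n) \<Rightarrow> ('t \<Rightarrow> 'n \<Rightarrow> real^'n) \<Rightarrow> real^'n \<Rightarrow> ('t + ('t \<times> 'n)) set \<Rightarrow> bool" where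
  "prlp_basic a b \<sigma> T p r \<alpha> Q \<longleftrightarrow>
     prlp_feasible a b \<sigma> T p r \<alpha> \<and>
     Q \<subseteq> Inl ` T \<union> Inr ` (T \<times> UNIV) \<and> card Q = CARD('n) \<and>
     inj_on (prlp_coef a b \<sigma> p r) Q \<and> independent (prlp_coef a b \<sigma> p r ` Q) \<and>
     (\<forall>q\<in>Q. \<alpha> \<bullet> prlp_coef a b \<sigma> p r q = prlp_rhs q)"

definition stray_ray :: "('i \<Rightarrow> real^'n) \<Rightarrow> ('i \<Rightarrow> real) \<Rightarrow> ('n \<Rightarrow> 'i) \<Rightarrow> 't set \<Rightarrow>
    ('t \<Rightarrow> real^'n) \<Rightarrow> ('t \<Rightarrow> 'n \<Rightarrow> real^'n) \<Rightarrow> ('t \<Rightarrow> (real^'n) set) \<Rightarrow> real^'n \<Rightarrow> 't \<Rightarrow> 'n \<Rightarrow> bool" where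
  "stray_ray a b \<sigma> T p r C \<alpha> t j \<longleftrightarrow>
     \<not> (\<exists>t'\<in>T. extreme_ray_of (r t j) (C t') (p t') \<and> \<alpha> \<bullet> nb_pt a b \<sigma> (p t') = 1)"

definition standard_facet :: "('i \<Rightarrow> real^'n) \<Rightarrow> ('i \<Rightarrow> real) \<Rightarrow> ('n \<Rightarrow> 'i) \<Rightarrow> 't set \<Rightarrow>
    ('t \<Rightarrow> real^'n) \<Rightarrow> ('t \<Rightarrow> 'n \<Rightarrow> real^'n) \<Rightarrow> ('t \<Rightarrow> (real^'n) set) \<Rightarrow>
    (real^'n) set \<Rightarrow> (real^'n) set \<Rightarrow> bool" where
  "standard_facet a b \<sigma> T p r C PD0 F \<longleftrightarrow>
     (\<exists>\<alpha> Q. prlp_basic a b \<sigma> T p r \<alpha> Q \<and>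
            F = {x \<in> PD0. \<alpha> \<bullet> nb_pt a b \<sigma> x = 1} \<and>
            (\<forall>t j. Inr (t, j) \<in> Q \<longrightarrow> \<not> stray_ray a b \<sigma> T p r C \<alpha> t j))"

end

theory Submission
  imports Defs
begin

text \<open>In original coordinates the cut alpha~ x~ >= 1 reads g x >= beta with
  g = sum_j alpha_j a_sigma(j). It is valid for P_D because P^t lies in the basis cone C^t, and on
  C^t the cut holds at the apex p^t and along every extreme ray, each a positive multiple of some
  r^tj. It cuts off xbar, the origin of the nonbasic space. Since the basis at p^t is unique, p^t is
  nondegenerate, so P^t contains a small step from p^t along every ray of C^t; in particular P^t, and
  hence P_D, is full-dimensional. The n tight constraints of the basic solution alpha~ give n
  linearly independent vectors: tight points p^t, which lie on the hyperplane, and tight rays r^tj,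
  which, not being stray, are directions from some tight p^t' into P^t'. Together they force the
  hyperplane to meet P_D in a face of dimension n - 1.\<close>

section \<open>Dual bases and basis cones\<close>

definition dual_basis :: "'k set \<Rightarrow> ('k \<Rightarrow> 'a::real_inner) \<Rightarrow> ('k \<Rightarrow> 'a) \<Rightarrow> bool" where
  "dual_basis N u w \<longleftrightarrow>
     (\<forall>k\<in>N. \<forall>k'\<in>N. u k' \<bullet> w k = (if k' = k then 1 else 0)) \<and>
     (\<forall>y. (\<Sum>k\<in>N. (u k \<bullet> y) *\<^sub>R w k) = y)"

lemma dual_basis_inner:
  "dual_basis N u w \<Longrightarrow> k \<in> N \<Longrightarrow> k' \<in> N \<Longrightarrow> u k' \<bullet> w k = (if k' = k then 1 else 0)"
  by (simp add: dual_basis_def)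

lemma dual_basis_expansion: "dual_basis N u w \<Longrightarrow> (\<Sum>k\<in>N. (u k \<bullet> y) *\<^sub>R w k) = y"
  by (simp add: dual_basis_def)

lemma orthogonal_spanning_eq_0:
  fixes x :: "'a::euclidean_space"
  assumes "span B = UNIV" and "\<And>v. v \<in> B \<Longrightarrow> v \<bullet> x = 0"
  shows "x = 0"
proof -
  have "orthogonal x x"
    by (rule orthogonal_to_span) (use assms in \<open>auto simp: orthogonal_def inner_commute\<close>)
  then show ?thesis by (simp add: orthogonal_def)
qed

lemma dual_vector_exists:
  fixes v :: "'a::euclidean_space"
  assumes "v \<notin> span B"
  obtains w where "v \<bullet> w = 1" and "\<And>b. b \<in> B \<Longrightarrow> b \<bullet> w = 0"
proof -
  obtain y z where y: "y \<in> span B" and z: "\<And>x. x \<in> span B \<Longrightarrow> orthogonal z x"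
    and v: "v = y + z"
    using orthogonal_subspace_decomp_exists by blast
  have "z \<noteq> 0" using y v assms by auto
  have "y \<bullet> z = 0"
    using z[OF y] by (simp add: orthogonal_def inner_commute)
  show ?thesis
  proof (rule that)
    show "v \<bullet> (z /\<^sub>R (z \<bullet> z)) = 1"
      using \<open>y \<bullet> z = 0\<close> \<open>z \<noteq> 0\<close> by (simp add: v inner_add_left)
    show "b \<bullet> (z /\<^sub>R (z \<bullet> z)) = 0" if "b \<in> B" for b
      using z[of b] that by (simp add: span_base orthogonal_def inner_commute)
  qed
qed

lemma dual_basis_exists:
  fixes u :: "'k \<Rightarrow> 'a::euclidean_space"
  assumes fin: "finite N" and inj: "inj_on u N" and ind: "independent (u ` N)"
    and span: "span (u ` N) = UNIV"
  obtains w where "dual_basis N u w"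
proof -
  have "\<forall>k\<in>N. \<exists>v. u k \<bullet> v = 1 \<and> (\<forall>k'\<in>N - {k}. u k' \<bullet> v = 0)"
  proof
    fix k assume k: "k \<in> N"
    have "u ` N = insert (u k) (u ` (N - {k}))" and notin: "u k \<notin> u ` (N - {k})"
      using k inj by (auto simp: inj_on_def)
    then have "independent (insert (u k) (u ` (N - {k})))"
      using ind by simp
    then have "u k \<notin> span (u ` (N - {k}))"
      using notin by (simp add: independent_insert)
    then obtain v where "u k \<bullet> v = 1" "\<And>b. b \<in> u ` (N - {k}) \<Longrightarrow> b \<bullet> v = 0"
      by (rule dual_vector_exists) blast
    then show "\<exists>v. u k \<bullet> v = 1 \<and> (\<forall>k'\<in>N - {k}. u k' \<bullet> v = 0)" by blast
  qed
  then obtain w where w: "\<forall>k\<in>N. u k \<bullet> w k = 1 \<and> (\<forall>k'\<in>N - {k}. u k' \<bullet> w k = 0)"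
    by (rule bchoice[elim_format]) blast
  have biorth: "\<forall>k\<in>N. \<forall>k'\<in>N. u k' \<bullet> w k = (if k' = k then 1 else 0)"
    using w by auto
  have "(\<Sum>k\<in>N. (u k \<bullet> y) *\<^sub>R w k) = y" for y
  proof -
    have "u k' \<bullet> (\<Sum>k\<in>N. (u k \<bullet> y) *\<^sub>R w k) = u k' \<bullet> y" if "k' \<in> N" for k'
    proof -
      have "u k' \<bullet> (\<Sum>k\<in>N. (u k \<bullet> y) *\<^sub>R w k) = (\<Sum>k\<in>N. (u k \<bullet> y) * (u k' \<bullet> w k))"
        by (simp add: inner_sum_right)
      also have "\<dots> = (\<Sum>k\<in>N. if k = k' then u k' \<bullet> y else 0)"
        using biorth that by (intro sum.cong) auto
      finally show ?thesis using that fin by simp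
    qed
    then have "y - (\<Sum>k\<in>N. (u k \<bullet> y) *\<^sub>R w k) = 0"
      by (intro orthogonal_spanning_eq_0[OF span]) (auto simp: inner_diff_right)
    then show ?thesis by simp
  qed
  with biorth show ?thesis using that unfolding dual_basis_def by blast
qed

lemma cobasis_finite: "is_cobasis S u h x N \<Longrightarrow> finite N"
  by (metis is_cobasis_def card.infinite zero_less_card_finite less_irrefl)

lemma cobasis_span:
  fixes u :: "'k \<Rightarrow> real^'n"
  assumes "is_cobasis S u h x N"
  shows "span (u ` N) = UNIV"
proof -
  have "dim (u ` N) = DIM(real^'n)"
    using assms by (simp add: is_cobasis_def dim_eq_card_independent card_image)
  then show ?thesis using dim_eq_full by blast
qed

lemma cobasis_dual_basis:
  assumes "is_cobasis S u h x N"
  obtains w where "dual_basis N u w"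
  using dual_basis_exists[OF cobasis_finite[OF assms] _ _ cobasis_span[OF assms]] assms
  unfolding is_cobasis_def by blast

lemma convex_ineq_poly: "convex (ineq_poly S u h)"
proof -
  have "ineq_poly S u h = (\<Inter>k\<in>S. {x. h k \<le> u k \<bullet> x})"
    by (auto simp: ineq_poly_def)
  then show ?thesis by (simp add: convex_INT convex_halfspace_ge)
qed

text \<open>The ray is cut out of the cone by the other constraints of the cobasis, each of which
  defines a face.\<close>

lemma dual_basis_extreme_ray:
  assumes "finite N" and dual: "dual_basis N u w" and tight: "\<forall>k\<in>N. u k \<bullet> p = h k"
    and k: "k \<in> N"
  shows "extreme_ray_of (w k) (ineq_poly N u h) p"
proof -
  let ?C = "ineq_poly N u h"
  let ?faces = "insert ?C ((\<lambda>k'. ?C \<inter> {x. u k' \<bullet> x = h k'}) ` (N - {k}))"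
  have ray_eq: "{p + s *\<^sub>R w k | s. s \<ge> 0} = \<Inter> ?faces"
  proof (intro equalityI subsetI)
    fix x assume "x \<in> {p + s *\<^sub>R w k | s. s \<ge> 0}"
    then obtain s where s: "s \<ge> 0" "x = p + s *\<^sub>R w k" by blast
    have "u k' \<bullet> x = h k' + s * (if k' = k then 1 else 0)" if "k' \<in> N" for k'
      using tight dual_basis_inner[OF dual k that] that s(2) by (simp add: inner_add_right)
    then have "x \<in> ?C" "\<forall>k'\<in>N - {k}. u k' \<bullet> x = h k'"
      using s(1) by (auto simp: ineq_poly_def)
    then show "x \<in> \<Inter> ?faces" by blast
  next
    fix x assume "x \<in> \<Inter> ?faces"
    then have x: "x \<in> ?C" and x_tight: "\<And>k'. k' \<in> N - {k} \<Longrightarrow> u k' \<bullet> x = h k'"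
      by blast+
    have "x - p = (\<Sum>k'\<in>N. (u k' \<bullet> (x - p)) *\<^sub>R w k')"
      by (rule dual_basis_expansion[OF dual, symmetric])
    also have "\<dots> = (\<Sum>k'\<in>N. if k' = k then (u k \<bullet> (x - p)) *\<^sub>R w k else 0)"
      using x_tight tight by (intro sum.cong) (auto simp: inner_diff_right)
    also have "\<dots> = (u k \<bullet> (x - p)) *\<^sub>R w k" using k \<open>finite N\<close> by simp
    finally have "x = p + (u k \<bullet> (x - p)) *\<^sub>R w k" by (simp add: algebra_simps)
    moreover have "u k \<bullet> (x - p) \<ge> 0"
      using x tight k by (auto simp: ineq_poly_def inner_diff_right)
    ultimately show "x \<in> {p + s *\<^sub>R w k | s. s \<ge> 0}" by blast
  qed
  have "\<Inter> ?faces face_of ?C"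
  proof (rule face_of_Inter)
    have "?C \<inter> {x. u k' \<bullet> x = h k'} face_of ?C" if "k' \<in> N" for k'
      using that by (intro face_of_Int_supporting_hyperplane_ge convex_ineq_poly)
        (simp add: ineq_poly_def)
    then show "\<And>F. F \<in> ?faces \<Longrightarrow> F face_of ?C"
      using face_of_refl[OF convex_ineq_poly] by blast
  qed simp
  then have "{p + s *\<^sub>R w k | s. s \<ge> 0} face_of ?C"
    by (simp only: ray_eq)
  moreover have "w k \<noteq> 0" using dual_basis_inner[OF dual k k] by auto
  ultimately show ?thesis by (simp add: extreme_ray_of_def)
qed

lemma extreme_ray_of_apex_add:
  assumes "extreme_ray_of \<rho> C p"
  shows "p + \<rho> \<in> C"
proof -
  have "{p + s *\<^sub>R \<rho> | s. s \<ge> 0} \<subseteq> C"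
    using assms by (simp add: extreme_ray_of_def face_of_imp_subset)
  moreover have "p + \<rho> \<in> {p + s *\<^sub>R \<rho> | s. s \<ge> 0}"
    by (rule CollectI, rule exI[of _ 1]) simp
  ultimately show ?thesis by blast
qed

lemma basis_cone_subset_halfspace:
  fixes u :: "'k \<Rightarrow> real^'n"
  assumes cob: "is_cobasis S u h p N"
    and rays: "\<And>\<rho>. extreme_ray_of \<rho> (basis_cone u h N) p \<Longrightarrow> 0 \<le> g \<bullet> \<rho>"
  shows "basis_cone u h N \<subseteq> {x. g \<bullet> p \<le> g \<bullet> x}"
proof
  fix x assume x: "x \<in> basis_cone u h N"
  obtain w where dual: "dual_basis N u w" by (rule cobasis_dual_basis[OF cob])
  have tight: "\<forall>k\<in>N. u k \<bullet> p = h k" using cob by (simp add: is_cobasis_def)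
  have "0 \<le> g \<bullet> w k" if "k \<in> N" for k
    using rays dual_basis_extreme_ray[OF cobasis_finite[OF cob] dual tight that]
    by (simp add: basis_cone_def)
  moreover have "0 \<le> u k \<bullet> (x - p)" if "k \<in> N" for k
    using x tight that by (auto simp: basis_cone_def ineq_poly_def inner_diff_right)
  ultimately have "0 \<le> g \<bullet> (\<Sum>k\<in>N. (u k \<bullet> (x - p)) *\<^sub>R w k)"
    by (simp add: inner_sum_right sum_nonneg)
  also have "(\<Sum>k\<in>N. (u k \<bullet> (x - p)) *\<^sub>R w k) = x - p"
    by (rule dual_basis_expansion[OF dual])
  finally show "x \<in> {x. g \<bullet> p \<le> g \<bullet> x}"
    by (simp add: inner_diff_right)
qed

lemma ineq_poly_subset_basis_cone: "is_cobasis S u h p N \<Longrightarrow> ineq_poly S u h \<subseteq> basis_cone u h N"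
  by (auto simp: is_cobasis_def basis_cone_def ineq_poly_def)

lemma disjunctive_hull_subset_halfspace:
  fixes u :: "'t \<Rightarrow> 'k \<Rightarrow> real^'n"
  assumes cob: "\<And>t. t \<in> T \<Longrightarrow> is_cobasis (S t) (u t) (h t) (p t) (N t)"
    and apex: "\<And>t. t \<in> T \<Longrightarrow> \<beta> \<le> g \<bullet> p t"
    and rays: "\<And>t \<rho>. t \<in> T \<Longrightarrow> extreme_ray_of \<rho> (basis_cone (u t) (h t) (N t)) (p t) \<Longrightarrow> 0 \<le> g \<bullet> \<rho>"
  shows "closure (convex hull (\<Union>t\<in>T. ineq_poly (S t) (u t) (h t))) \<subseteq> {x. \<beta> \<le> g \<bullet> x}"
proof -
  have "ineq_poly (S t) (u t) (h t) \<subseteq> {x. \<beta> \<le> g \<bullet> x}" if t: "t \<in> T" for t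
    using ineq_poly_subset_basis_cone[OF cob[OF t]] basis_cone_subset_halfspace[OF cob[OF t] rays[OF t]]
      apex[OF t] by fastforce
  then show ?thesis
    by (intro closure_minimal hull_minimal closed_halfspace_ge convex_halfspace_ge) auto
qed

lemma hull_sum_subset_halfspace:
  assumes "\<And>x. x \<in> X \<Longrightarrow> \<beta> \<le> g \<bullet> x" and "\<And>v. v \<in> R \<Longrightarrow> 0 \<le> g \<bullet> v"
  shows "{u + v | u v. u \<in> convex hull X \<and> v \<in> convex_cone hull R} \<subseteq> {x. \<beta> \<le> g \<bullet> x}"
proof -
  have X: "convex hull X \<subseteq> {x. \<beta> \<le> g \<bullet> x}"
    using assms(1) by (intro hull_minimal convex_halfspace_ge) auto
  have R: "convex_cone hull R \<subseteq> {x. 0 \<le> g \<bullet> x}"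
    using assms(2) by (intro hull_minimal convex_cone_halfspace_ge) auto
  show ?thesis
  proof
    fix x assume "x \<in> {u + v | u v. u \<in> convex hull X \<and> v \<in> convex_cone hull R}"
    then obtain u v where "x = u + v" "\<beta> \<le> g \<bullet> u" "0 \<le> g \<bullet> v"
      using X R by blast
    then show "x \<in> {x. \<beta> \<le> g \<bullet> x}" by (simp add: inner_add_right)
  qed
qed

section \<open>Vertices with a unique cobasis\<close>

text \<open>If q were tight as well, exchanging it for a member k0 of N with u q \<bullet> w k0 \<noteq> 0 would
  give a second cobasis.\<close>

lemma unique_cobasis_nondegenerate:
  fixes u :: "'k \<Rightarrow> real^'n"
  assumes cob: "is_cobasis S u h p N"
    and unique: "\<And>N'. is_cobasis S u h p N' \<Longrightarrow> N' = N"
    and q: "q \<in> S" "q \<notin> N" "u q \<noteq> 0"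
  shows "u q \<bullet> p \<noteq> h q"
proof
  assume tight_q: "u q \<bullet> p = h q"
  obtain w where dual: "dual_basis N u w" by (rule cobasis_dual_basis[OF cob])
  have "\<exists>k0\<in>N. u q \<bullet> w k0 \<noteq> 0"
  proof (rule ccontr)
    assume "\<not> ?thesis"
    then have "u q \<bullet> (\<Sum>k\<in>N. (u k \<bullet> u q) *\<^sub>R w k) = 0"
      by (simp add: inner_sum_right)
    then show False using q(3) by (simp add: dual_basis_expansion[OF dual])
  qed
  then obtain k0 where k0: "k0 \<in> N" "u q \<bullet> w k0 \<noteq> 0" by blast
  have orth: "orthogonal (w k0) (u k)" if "k \<in> N - {k0}" for k
    using dual_basis_inner[OF dual k0(1), of k] that by (simp add: orthogonal_def inner_commute)
  have not_span: "u q \<notin> span (u ` (N - {k0}))"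
  proof
    assume "u q \<in> span (u ` (N - {k0}))"
    then have "orthogonal (w k0) (u q)"
      by (rule orthogonal_to_span) (auto intro: orth)
    with k0(2) show False by (simp add: orthogonal_def inner_commute)
  qed
  have fin: "finite N" and inj: "inj_on u N" and ind: "independent (u ` N)"
    using cob cobasis_finite unfolding is_cobasis_def by blast+
  have notin: "u q \<notin> u ` (N - {k0})" by (meson not_span span_base)
  define N' where "N' = insert q (N - {k0})"
  have "is_cobasis S u h p N'"
    unfolding is_cobasis_def
  proof (intro conjI)
    show "N' \<subseteq> S" using cob q by (auto simp: N'_def is_cobasis_def)
    have "card N' = Suc (card (N - {k0}))"
      unfolding N'_def using fin q(2) by (intro card_insert_disjoint) auto
    also have "\<dots> = card N" using fin k0(1) by (rule card.remove[symmetric])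
    also have "\<dots> = CARD('n)" using cob by (simp add: is_cobasis_def)
    finally show "card N' = CARD('n)" .
    have "N - {k0} - {q} = N - {k0}" using q(2) by blast
    moreover have "inj_on u (N - {k0})" using inj by (rule inj_on_subset) blast
    ultimately show "inj_on u N'"
      using notin by (simp add: N'_def inj_on_insert)
    have "independent (u ` (N - {k0}))"
      using ind by (rule independent_mono) blast
    then show "independent (u ` N')"
      using notin not_span by (simp add: N'_def independent_insert)
    show "\<forall>k\<in>N'. u k \<bullet> p = h k" using cob tight_q by (auto simp: N'_def is_cobasis_def)
  qed
  then have "N' = N" by (rule unique)
  then show False using q(2) by (auto simp: N'_def)
qed

lemma unique_cobasis_step:
  fixes u :: "'k \<Rightarrow> real^'n"
  assumes fin: "finite S" and p: "p \<in> ineq_poly S u h"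
    and cob: "is_cobasis S u h p N" and unique: "\<And>N'. is_cobasis S u h p N' \<Longrightarrow> N' = N"
    and \<rho>: "p + \<rho> \<in> basis_cone u h N"
  shows "\<exists>s>0. p + s *\<^sub>R \<rho> \<in> ineq_poly S u h"
proof -
  have "\<forall>q\<in>S. \<forall>\<^sub>F s in at_right 0. h q \<le> u q \<bullet> (p + s *\<^sub>R \<rho>)"
  proof
    fix q assume q: "q \<in> S"
    have "h q < u q \<bullet> p \<or> 0 \<le> u q \<bullet> \<rho>"
    proof (cases "q \<in> N \<or> u q = 0")
      case True
      then show ?thesis
        using \<rho> cob by (auto simp: basis_cone_def ineq_poly_def is_cobasis_def inner_add_right)
    next
      case False
      then show ?thesis
        using unique_cobasis_nondegenerate[OF cob unique q] p q
        by (auto simp: ineq_poly_def order_less_le)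
    qed
    then show "\<forall>\<^sub>F s in at_right 0. h q \<le> u q \<bullet> (p + s *\<^sub>R \<rho>)"
    proof
      assume "h q < u q \<bullet> p"
      moreover have "((\<lambda>s. u q \<bullet> (p + s *\<^sub>R \<rho>)) \<longlongrightarrow> u q \<bullet> p) (at_right 0)"
        by (auto intro!: tendsto_eq_intros)
      ultimately have "\<forall>\<^sub>F s in at_right 0. h q < u q \<bullet> (p + s *\<^sub>R \<rho>)"
        using order_tendstoD(1) by blast
      then show ?thesis by (rule eventually_mono) simp
    next
      assume "0 \<le> u q \<bullet> \<rho>"
      then show ?thesis
        using p q eventually_at_right_less[of "0::real"]
        by (auto simp: ineq_poly_def inner_add_right elim!: eventually_mono
            intro: add_increasing2)
    qed
  qed
  then have "\<forall>\<^sub>F s in at_right 0. \<forall>q\<in>S. h q \<le> u q \<bullet> (p + s *\<^sub>R \<rho>)"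
    by (rule eventually_ball_finite[OF fin])
  with eventually_at_right_less
  have "\<forall>\<^sub>F s in at_right 0. 0 < s \<and> (\<forall>q\<in>S. h q \<le> u q \<bullet> (p + s *\<^sub>R \<rho>))"
    by (rule eventually_conj)
  then obtain s where "0 < s \<and> (\<forall>q\<in>S. h q \<le> u q \<bullet> (p + s *\<^sub>R \<rho>))"
    using eventually_happens'[OF trivial_limit_at_right_real] by blast
  then show ?thesis unfolding ineq_poly_def by blast
qed

lemma direction_in_span_translate:
  fixes F :: "'a::real_vector set"
  assumes "x \<in> F" "x + s *\<^sub>R v \<in> F" "s \<noteq> 0"
  shows "v \<in> span ((\<lambda>y. y - z) ` F)"
proof -
  have "(x + s *\<^sub>R v - z) - (x - z) \<in> span ((\<lambda>y. y - z) ` F)"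
    using assms by (intro span_diff span_base) auto
  then have "(1 / s) *\<^sub>R ((x + s *\<^sub>R v - z) - (x - z)) \<in> span ((\<lambda>y. y - z) ` F)"
    by (rule span_scale)
  then show ?thesis using assms(3) by simp
qed

lemma unique_cobasis_aff_dim:
  fixes u :: "'k \<Rightarrow> real^'n"
  assumes fin: "finite S" and p: "p \<in> ineq_poly S u h"
    and cob: "is_cobasis S u h p N" and unique: "\<And>N'. is_cobasis S u h p N' \<Longrightarrow> N' = N"
  shows "aff_dim (ineq_poly S u h) = CARD('n)"
proof -
  let ?D = "(\<lambda>x. x - p) ` ineq_poly S u h"
  obtain w where dual: "dual_basis N u w" by (rule cobasis_dual_basis[OF cob])
  have fin_N: "finite N" and tight: "\<forall>k\<in>N. u k \<bullet> p = h k"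
    using cob cobasis_finite[OF cob] by (auto simp: is_cobasis_def)
  have "w k \<in> span ?D" if k: "k \<in> N" for k
  proof -
    have "p + w k \<in> basis_cone u h N"
      unfolding basis_cone_def using dual_basis_extreme_ray[OF fin_N dual tight k]
      by (rule extreme_ray_of_apex_add)
    then obtain s where "s > 0" "p + s *\<^sub>R w k \<in> ineq_poly S u h"
      using unique_cobasis_step[OF fin p cob unique] by blast
    then show ?thesis
      using p by (intro direction_in_span_translate) auto
  qed
  then have "(\<Sum>k\<in>N. (u k \<bullet> y) *\<^sub>R w k) \<in> span ?D" for y
    by (intro span_sum span_scale)
  then have "span ?D = UNIV"
    by (auto simp: dual_basis_expansion[OF dual])
  then have "dim ?D = CARD('n)" using dim_eq_full[of ?D] by simp
  moreover have "aff_dim (ineq_poly S u h) = int (dim ?D)"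
    by (rule aff_dim_eq_dim_subtract) (rule hull_inc[OF p])
  ultimately show ?thesis by simp
qed

section \<open>The cut in original coordinates\<close>

definition cut_normal :: "('i \<Rightarrow> real^'n) \<Rightarrow> ('n \<Rightarrow> 'i) \<Rightarrow> real^'n \<Rightarrow> real^'n" where
  "cut_normal a \<sigma> \<alpha> = (\<Sum>j\<in>UNIV. \<alpha> $ j *\<^sub>R a (\<sigma> j))"

definition cut_rhs :: "('i \<Rightarrow> real) \<Rightarrow> ('n \<Rightarrow> 'i) \<Rightarrow> real^'n \<Rightarrow> real" where
  "cut_rhs b \<sigma> \<alpha> = 1 + (\<Sum>j\<in>UNIV. \<alpha> $ j * b (\<sigma> j))"

lemma inner_nb_ray: "\<alpha> \<bullet> nb_ray a \<sigma> y = cut_normal a \<sigma> \<alpha> \<bullet> y"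
  by (simp add: inner_vec_def[of \<alpha>] nb_ray_def cut_normal_def inner_sum_left)

lemma inner_nb_pt: "\<alpha> \<bullet> nb_pt a b \<sigma> x = cut_normal a \<sigma> \<alpha> \<bullet> x - cut_rhs b \<sigma> \<alpha> + 1"
  by (simp add: inner_vec_def[of \<alpha>] nb_pt_def cut_normal_def cut_rhs_def inner_sum_left
      right_diff_distrib sum_subtractf)

lemma nb_pt_eq_nb_ray: "(\<And>j. a (\<sigma> j) \<bullet> x0 = b (\<sigma> j)) \<Longrightarrow> nb_pt a b \<sigma> x = nb_ray a \<sigma> (x - x0)"
  by (simp add: nb_pt_def nb_ray_def inner_diff_right)

lemma linear_nb_ray: "linear (nb_ray a \<sigma>)"
  by (rule linearI) (simp_all add: nb_ray_def vec_eq_iff inner_add_right)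

lemma inj_nb_ray:
  assumes "is_cobasis S a b x (range \<sigma>)"
  shows "inj (nb_ray a \<sigma>)"
proof -
  have "y = 0" if "nb_ray a \<sigma> y = 0" for y
  proof (rule orthogonal_spanning_eq_0)
    show "span (a ` range \<sigma>) = UNIV" using cobasis_span[OF assms] .
    show "\<And>v. v \<in> a ` range \<sigma> \<Longrightarrow> v \<bullet> y = 0"
      using that by (auto simp: nb_ray_def vec_eq_iff)
  qed
  then show ?thesis by (simp add: linear_injective_0[OF linear_nb_ray])
qed

lemma cut_normal_cobasis_point:
  assumes "is_cobasis S a b x0 (range \<sigma>)"
  shows "cut_normal a \<sigma> \<alpha> \<bullet> x0 = cut_rhs b \<sigma> \<alpha> - 1"
proof -
  have "nb_pt a b \<sigma> x0 = 0"
    using assms by (simp add: is_cobasis_def nb_pt_def vec_eq_iff)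
  then show ?thesis using inner_nb_pt[of \<alpha> a b \<sigma> x0] by simp
qed

text \<open>The preimage under nb_ray of the PRLP row q, when the nonbasic space is taken at x0.\<close>

definition prlp_vector :: "real^'n \<Rightarrow> ('t \<Rightarrow> real^'n) \<Rightarrow> ('t \<Rightarrow> 'n \<Rightarrow> real^'n) \<Rightarrow>
    't + ('t \<times> 'n) \<Rightarrow> real^'n" where
  "prlp_vector x0 p r q = (case q of Inl t \<Rightarrow> p t - x0 | Inr (t, j) \<Rightarrow> r t j)"

lemma prlp_coef_eq_nb_ray:
  assumes "\<And>j. a (\<sigma> j) \<bullet> x0 = b (\<sigma> j)"
  shows "prlp_coef a b \<sigma> p r q = nb_ray a \<sigma> (prlp_vector x0 p r q)"
  using assms by (auto simp: prlp_coef_def prlp_vector_def nb_pt_eq_nb_ray split: sum.split)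

lemma prlp_basic_span:
  fixes a :: "'i \<Rightarrow> real^'n"
  assumes basic: "prlp_basic a b \<sigma> T p r \<alpha> Q" and cob: "is_cobasis S a b x0 (range \<sigma>)"
  shows "span (prlp_vector x0 p r ` Q) = UNIV"
proof -
  let ?L = "nb_ray a \<sigma>" and ?V = "prlp_vector x0 p r ` Q"
  have "dim (prlp_coef a b \<sigma> p r ` Q) = CARD('n)"
    using basic by (simp add: prlp_basic_def dim_eq_card_independent card_image)
  then have "span (prlp_coef a b \<sigma> p r ` Q) = UNIV"
    using dim_eq_full[of "prlp_coef a b \<sigma> p r ` Q"] by simp
  moreover have "prlp_coef a b \<sigma> p r = ?L \<circ> prlp_vector x0 p r"
    using cob by (intro ext) (simp add: prlp_coef_eq_nb_ray is_cobasis_def)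
  ultimately have "span (?L ` ?V) = UNIV"
    by (metis image_comp)
  then have "?L ` span ?V = UNIV"
    by (simp add: span_linear_image[OF linear_nb_ray])
  then have "?L y \<in> ?L ` span ?V" for y by simp
  then show ?thesis using inj_image_mem_iff[OF inj_nb_ray[OF cob]] by blast
qed

lemma prlp_basic_terms_nonempty:
  assumes "prlp_basic a b \<sigma> T p r \<alpha> Q"
  obtains t where "t \<in> T"
proof -
  have "Q \<noteq> {}" using assms by (auto simp: prlp_basic_def)
  then show ?thesis using assms that by (auto simp: prlp_basic_def)
qed

lemma prlp_basic_tight:
  fixes a :: "'i \<Rightarrow> real^'n"
  assumes basic: "prlp_basic a b \<sigma> T p r \<alpha> Q" and cob: "is_cobasis S a b x0 (range \<sigma>)"
    and q: "q \<in> Q"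
  shows "cut_normal a \<sigma> \<alpha> \<bullet> prlp_vector x0 p r q = prlp_rhs q"
proof -
  have "a (\<sigma> j) \<bullet> x0 = b (\<sigma> j)" for j using cob by (simp add: is_cobasis_def)
  then have "cut_normal a \<sigma> \<alpha> \<bullet> prlp_vector x0 p r q = \<alpha> \<bullet> prlp_coef a b \<sigma> p r q"
    by (simp add: prlp_coef_eq_nb_ray[of a \<sigma> x0 b] inner_nb_ray)
  then show ?thesis using basic q by (simp add: prlp_basic_def)
qed

lemma cut_normal_nonzero:
  fixes a :: "'i \<Rightarrow> real^'n"
  assumes basic: "prlp_basic a b \<sigma> T p r \<alpha> Q" and cob: "is_cobasis S a b x0 (range \<sigma>)"
  shows "cut_normal a \<sigma> \<alpha> \<noteq> 0"
proof
  assume g0: "cut_normal a \<sigma> \<alpha> = 0"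
  obtain t where t: "t \<in> T" by (rule prlp_basic_terms_nonempty[OF basic])
  have "a (\<sigma> j) \<bullet> x0 = b (\<sigma> j)" for j using cob by (simp add: is_cobasis_def)
  then have "\<alpha> \<bullet> nb_pt a b \<sigma> (p t) = cut_normal a \<sigma> \<alpha> \<bullet> (p t - x0)"
    by (simp add: nb_pt_eq_nb_ray[of a \<sigma> x0 b] inner_nb_ray)
  moreover have "1 \<le> \<alpha> \<bullet> nb_pt a b \<sigma> (p t)"
    using basic t by (simp add: prlp_basic_def prlp_feasible_def)
  ultimately show False using g0 by simp
qed

section \<open>Facets cut out by a basic solution of PRLP^0\<close>

lemma hyperplane_subset_span:
  fixes f :: "'q \<Rightarrow> 'a::euclidean_space"
  assumes spanning: "span (f ` Q) = UNIV"
    and shifted: "\<And>q. q \<in> Q \<Longrightarrow> f q - (g \<bullet> f q) *\<^sub>R z \<in> span D"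
  shows "{y. g \<bullet> y = 0} \<subseteq> span D"
proof -
  let ?U = "{y. y - (g \<bullet> y) *\<^sub>R z \<in> span D}"
  have "subspace ?U"
    unfolding subspace_def
  proof (intro conjI ballI allI)
    show "0 \<in> ?U" by (simp add: span_zero)
  next
    fix x y assume "x \<in> ?U" "y \<in> ?U"
    then have "(x - (g \<bullet> x) *\<^sub>R z) + (y - (g \<bullet> y) *\<^sub>R z) \<in> span D"
      by (simp add: span_add)
    moreover have "(x - (g \<bullet> x) *\<^sub>R z) + (y - (g \<bullet> y) *\<^sub>R z) = x + y - (g \<bullet> (x + y)) *\<^sub>R z"
      by (simp add: inner_add_right scaleR_add_left)
    ultimately show "x + y \<in> ?U" by simp
  next
    fix c x assume "x \<in> ?U"
    then have "c *\<^sub>R (x - (g \<bullet> x) *\<^sub>R z) \<in> span D"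
      by (simp add: span_scale)
    moreover have "c *\<^sub>R (x - (g \<bullet> x) *\<^sub>R z) = c *\<^sub>R x - (g \<bullet> (c *\<^sub>R x)) *\<^sub>R z"
      by (simp add: scaleR_diff_right)
    ultimately show "c *\<^sub>R x \<in> ?U" by simp
  qed
  moreover have "f ` Q \<subseteq> ?U" using shifted by blast
  ultimately have "span (f ` Q) \<subseteq> ?U" by (rule span_minimal[rotated])
  then have shift: "y - (g \<bullet> y) *\<^sub>R z \<in> span D" for y using spanning by blast
  show ?thesis
  proof
    fix y assume "y \<in> {y. g \<bullet> y = 0}"
    with shift[of y] show "y \<in> span D" by simp
  qed
qed

lemma facet_of_supporting_hyperplane:
  fixes S :: "'a::euclidean_space set"
  assumes S: "convex S" "aff_dim S = DIM('a)" "S \<subseteq> {x. \<beta> \<le> g \<bullet> x}" and g: "g \<noteq> 0"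
    and z: "z \<in> S" "g \<bullet> z = \<beta>"
    and spanning: "{y. g \<bullet> y = 0} \<subseteq> span ((\<lambda>x. x - z) ` (S \<inter> {x. g \<bullet> x = \<beta>}))"
  shows "(S \<inter> {x. g \<bullet> x = \<beta>}) facet_of S"
proof -
  let ?F = "S \<inter> {x. g \<bullet> x = \<beta>}"
  have "?F face_of S" using S by (intro face_of_Int_supporting_hyperplane_ge) auto
  moreover have "aff_dim ?F \<le> int DIM('a) - 1"
    using aff_dim_subset[of ?F "{x. g \<bullet> x = \<beta>}"] g by simp
  moreover have "int DIM('a) - 1 \<le> aff_dim ?F"
  proof -
    have "DIM('a) - 1 \<le> dim ((\<lambda>x. x - z) ` ?F)"
      using dim_subset[OF spanning] dim_hyperplane[OF g] by simp
    moreover have "aff_dim ?F = int (dim ((\<lambda>x. x - z) ` ?F))"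
      by (rule aff_dim_eq_dim_subtract) (rule hull_inc, use z in blast)
    ultimately show ?thesis by linarith
  qed
  ultimately show ?thesis using z S(2) unfolding facet_of_def by auto
qed

lemma prlp_basic_facet:
  fixes S :: "(real^'n) set" and a :: "'i \<Rightarrow> real^'n" and b :: "'i \<Rightarrow> real"
    and \<sigma> :: "'n \<Rightarrow> 'i" and \<alpha> :: "real^'n"
  defines "g \<equiv> cut_normal a \<sigma> \<alpha>" and "\<beta> \<equiv> cut_rhs b \<sigma> \<alpha>"
  assumes basic: "prlp_basic a b \<sigma> T p r \<alpha> Q" and cob: "is_cobasis I a b x0 (range \<sigma>)"
    and S: "convex S" "aff_dim S = CARD('n)" "S \<subseteq> {x. \<beta> \<le> g \<bullet> x}"
    and points: "\<And>t. Inl t \<in> Q \<Longrightarrow> p t \<in> S"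
    and rays: "\<And>t j. Inr (t, j) \<in> Q \<Longrightarrow> \<exists>x\<in>S. g \<bullet> x = \<beta> \<and> (\<exists>s>0. x + s *\<^sub>R r t j \<in> S)"
  shows "(S \<inter> {x. g \<bullet> x = \<beta>}) facet_of S"
proof -
  let ?f = "prlp_vector x0 p r" and ?F = "S \<inter> {x. g \<bullet> x = \<beta>}"
  have tight: "g \<bullet> ?f q = prlp_rhs q" if "q \<in> Q" for q
    unfolding g_def using basic cob that by (rule prlp_basic_tight)
  have g_x0: "g \<bullet> x0 = \<beta> - 1"
    unfolding g_def \<beta>_def by (rule cut_normal_cobasis_point[OF cob])
  have point_in_F: "p t \<in> ?F" if "Inl t \<in> Q" for t
    using tight[OF that] points[OF that] g_x0
    by (simp add: prlp_vector_def prlp_rhs_def inner_diff_right)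
  have ray_in_F: "\<exists>x\<in>?F. \<exists>s>0. x + s *\<^sub>R r t j \<in> ?F" if "Inr (t, j) \<in> Q" for t j
  proof -
    have "g \<bullet> r t j = 0"
      using tight[OF that] by (simp add: prlp_vector_def prlp_rhs_def)
    then show ?thesis
      using rays[OF that] by (fastforce simp: inner_add_right)
  qed
  obtain q0 where q0: "q0 \<in> Q"
    using basic by (fastforce simp: prlp_basic_def)
  obtain z where z: "z \<in> ?F"
  proof (cases q0)
    case (Inl t)
    then show ?thesis using that point_in_F q0 by blast
  next
    case (Inr tj)
    moreover obtain t j where "tj = (t, j)" by fastforce
    ultimately show ?thesis using that ray_in_F q0 by blast
  qed
  let ?D = "(\<lambda>x. x - z) ` ?F"
  have "?f q - (g \<bullet> ?f q) *\<^sub>R (z - x0) \<in> span ?D" if q: "q \<in> Q" for q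
  proof (cases q)
    case (Inl t)
    then have "?f q - (g \<bullet> ?f q) *\<^sub>R (z - x0) = p t - z"
      using tight[OF q] by (simp add: prlp_vector_def prlp_rhs_def)
    then show ?thesis
      using point_in_F q Inl by (auto intro: span_base)
  next
    case (Inr tj)
    then obtain t j where tj: "q = Inr (t, j)" by (cases tj) auto
    then obtain x s where "x \<in> ?F" "s > 0" "x + s *\<^sub>R r t j \<in> ?F"
      using ray_in_F q by blast
    then have "r t j \<in> span ?D"
      by (intro direction_in_span_translate) auto
    then show ?thesis
      using tight[OF q] tj by (simp add: prlp_vector_def prlp_rhs_def)
  qed
  then have "{y. g \<bullet> y = 0} \<subseteq> span ?D"
    by (rule hyperplane_subset_span[OF prlp_basic_span[OF basic cob]])
  moreover have "g \<noteq> 0"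
    unfolding g_def by (rule cut_normal_nonzero[OF basic cob])
  ultimately show ?thesis
    using facet_of_supporting_hyperplane[OF S(1) _ S(3)] S(2) z by auto
qed

theorem theorem2:
  fixes I :: "'i set" and a :: "'i \<Rightarrow> real^'n" and b :: "'i \<Rightarrow> real"
    and c :: "real^'n" and xbar :: "real^'n" and \<sigma> :: "'n \<Rightarrow> 'i"
    and T :: "'t set" and K :: "'t \<Rightarrow> 'k set"
    and d :: "'t \<Rightarrow> 'k \<Rightarrow> real^'n" and d0 :: "'t \<Rightarrow> 'k \<Rightarrow> real"
    and p :: "'t \<Rightarrow> real^'n" and N :: "'t \<Rightarrow> ('i + 'k) set"
    and r :: "'t \<Rightarrow> 'n \<Rightarrow> real^'n" and F :: "(real^'n) set"
  defines "P \<equiv> ineq_poly I a b"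
    and "PD \<equiv> closure (convex hull
                 (\<Union>t\<in>T. ineq_poly (term_idx I K t) (term_row a d t) (term_rhs b d0 t)))"
    and "C \<equiv> (\<lambda>t. basis_cone (term_row a d t) (term_rhs b d0 t) (N t))"
    and "PD0 \<equiv> {u + v | u v. u \<in> convex hull (p ` T) \<and>
                   v \<in> convex_cone hull {r t j | t j. t \<in> T}}"
  assumes finI: "finite I"
    and rat: "\<forall>i\<in>I. b i \<in> \<rat> \<and> (\<forall>j. a i $ j \<in> \<rat>)"
    and fulldim: "aff_dim P = int CARD('n)"
    and pointed: "pointed P"
    and xbar_opt: "basic_optimal I a b c xbar"
    and sigma: "inj \<sigma>" "is_cobasis I a b xbar (range \<sigma>)"
    and finT: "finite T"
    and finK: "\<forall>t\<in>T. finite (K t)"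
    and xbar_out: "xbar \<notin> PD"
    and p_opt: "\<forall>t\<in>T. basic_optimal (term_idx I K t) (term_row a d t) (term_rhs b d0 t) c (p t)"
    and N_cob: "\<forall>t\<in>T. is_cobasis (term_idx I K t) (term_row a d t) (term_rhs b d0 t) (p t) (N t)"
    and N_unique: "\<forall>t\<in>T. \<forall>N'. is_cobasis (term_idx I K t) (term_row a d t) (term_rhs b d0 t) (p t) N'
                      \<longrightarrow> N' = N t"
    and rays_ext: "\<forall>t\<in>T. \<forall>j. extreme_ray_of (r t j) (C t) (p t)"
    and rays_all: "\<forall>t\<in>T. \<forall>\<rho>. extreme_ray_of \<rho> (C t) (p t) \<longrightarrow>
                      (\<exists>j. \<exists>\<mu>>0. \<rho> = \<mu> *\<^sub>R r t j)"
    and rays_distinct: "\<forall>t\<in>T. \<forall>j j'. j \<noteq> j' \<longrightarrow> \<not> (\<exists>\<mu>>0. r t j' = \<mu> *\<^sub>R r t j)"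
    and facet: "F facet_of PD0"
    and standard: "standard_facet a b \<sigma> T p r C PD0 F"
  shows "\<exists>g \<beta>. PD0 \<subseteq> {x. g \<bullet> x \<ge> \<beta>} \<and> F = PD0 \<inter> {x. g \<bullet> x = \<beta>} \<and>
               PD \<subseteq> {x. g \<bullet> x \<ge> \<beta>} \<and> (PD \<inter> {x. g \<bullet> x = \<beta>}) facet_of PD \<and>
               g \<bullet> xbar < \<beta>"
proof -
  obtain \<alpha> Q where basic: "prlp_basic a b \<sigma> T p r \<alpha> Q"
    and F_eq: "F = {x \<in> PD0. \<alpha> \<bullet> nb_pt a b \<sigma> x = 1}"
    and no_stray: "\<And>t j. Inr (t, j) \<in> Q \<Longrightarrow> \<not> stray_ray a b \<sigma> T p r C \<alpha> t j"
    using standard unfolding standard_facet_def by blast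
  define g \<beta> where "g = cut_normal a \<sigma> \<alpha>" and "\<beta> = cut_rhs b \<sigma> \<alpha>"
  let ?P = "\<lambda>t. ineq_poly (term_idx I K t) (term_row a d t) (term_rhs b d0 t)"
  have P_PD: "?P t \<subseteq> PD" if "t \<in> T" for t
    using that unfolding PD_def by (meson UN_upper closure_subset hull_subset subset_trans)
  have p_P: "p t \<in> ?P t" if "t \<in> T" for t
    using p_opt that by (simp add: basic_optimal_def)
  have fin: "finite (term_idx I K t)" if "t \<in> T" for t
    using finI finK that by (simp add: term_idx_def)
  have step: "\<exists>s>0. p t + s *\<^sub>R \<rho> \<in> ?P t" if "t \<in> T" "p t + \<rho> \<in> C t" for t \<rho>
    by (rule unique_cobasis_step[OF fin p_P N_cob[rule_format] N_unique[rule_format]])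
      (use that in \<open>simp_all add: C_def\<close>)
  from basic have p_valid: "\<forall>t\<in>T. \<beta> \<le> g \<bullet> p t" and r_valid: "\<forall>t\<in>T. \<forall>j. 0 \<le> g \<bullet> r t j"
    by (auto simp: prlp_basic_def prlp_feasible_def inner_nb_pt inner_nb_ray g_def \<beta>_def)
  have PD_valid: "PD \<subseteq> {x. \<beta> \<le> g \<bullet> x}"
    unfolding PD_def
  proof (rule disjunctive_hull_subset_halfspace)
    fix t \<rho> assume "t \<in> T" "extreme_ray_of \<rho> (basis_cone (term_row a d t) (term_rhs b d0 t) (N t)) (p t)"
    then obtain j \<mu> where "\<mu> > 0" "\<rho> = \<mu> *\<^sub>R r t j" using rays_all unfolding C_def by blast
    then show "0 \<le> g \<bullet> \<rho>" using r_valid \<open>t \<in> T\<close> by simp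
  qed (use N_cob p_valid in auto)
  obtain t0 where "t0 \<in> T" by (rule prlp_basic_terms_nonempty[OF basic])
  then have PD_full: "aff_dim PD = CARD('n)"
    using unique_cobasis_aff_dim[of "term_idx I K t0"] aff_dim_subset[OF P_PD] aff_dim_le_DIM[of PD]
      finI finK N_cob N_unique p_P
    by (fastforce simp: term_idx_def)
  have "(PD \<inter> {x. g \<bullet> x = \<beta>}) facet_of PD"
    unfolding g_def \<beta>_def
  proof (rule prlp_basic_facet[OF basic sigma(2)])
    show "convex PD" unfolding PD_def by simp
    show "aff_dim PD = CARD('n)" by fact
    show "PD \<subseteq> {x. cut_rhs b \<sigma> \<alpha> \<le> cut_normal a \<sigma> \<alpha> \<bullet> x}"
      using PD_valid by (simp add: g_def \<beta>_def)
    show "p t \<in> PD" if "Inl t \<in> Q" for t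
      using basic that P_PD p_P by (auto simp: prlp_basic_def)
    fix t j assume "Inr (t, j) \<in> Q"
    then obtain t' where t': "t' \<in> T" "extreme_ray_of (r t j) (C t') (p t')"
      "\<alpha> \<bullet> nb_pt a b \<sigma> (p t') = 1"
      using no_stray unfolding stray_ray_def by blast
    obtain s where "s > 0" "p t' + s *\<^sub>R r t j \<in> ?P t'"
      using step[OF t'(1) extreme_ray_of_apex_add[OF t'(2)]] by blast
    then show "\<exists>x\<in>PD. cut_normal a \<sigma> \<alpha> \<bullet> x = cut_rhs b \<sigma> \<alpha> \<and> (\<exists>s>0. x + s *\<^sub>R r t j \<in> PD)"
      using t' P_PD p_P by (auto simp: inner_nb_pt)
  qed
  moreover have "PD0 \<subseteq> {x. \<beta> \<le> g \<bullet> x}"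
    unfolding PD0_def using p_valid r_valid by (intro hull_sum_subset_halfspace) auto
  moreover have "g \<bullet> xbar < \<beta>"
    using cut_normal_cobasis_point[OF sigma(2)] by (simp add: g_def \<beta>_def)
  moreover have "F = PD0 \<inter> {x. g \<bullet> x = \<beta>}"
    using F_eq by (auto simp: inner_nb_pt g_def \<beta>_def)
  ultimately show ?thesis using PD_valid by blast
qed

end
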